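(* Let $\mathbf u$ be the infinite word over $\{0,1,2,3\}$ that is the fixed point starting with $0$ of the morphism $\varphi$ given by $\varphi(0)=0130$, $\varphi(1)=1021$, $\varphi(2)=102$, $\varphi(3)=013$, and let $\lambda=2+\sqrt3$. Set $p_0=p_2=10210$ and $p_1=p_3=01301$. If $v$ is a bispecial factor of $\mathbf u$ of length greater than $5$, then there is a factor $w$ of $\mathbf u$ with last letter $w_n$ such that $v=\varphi(w)p_{w_n}$, and moreover $\rho(v)=\frac{1}{\lambda}\rho(w)$.
   Context: The fixed point starting with $0$ is the unique infinite word having $\varphi^n(0)$ as a prefix for every $n$; since $\varphi$ is primitive, all factor frequencies of $\mathbf u$ exist. The frequency of a factor $w$ is $\rho(w)=\lim_{|v|\to\infty,\, v \text{ factor of } \mathbf u} \frac{\#\{\text{occurrences of } w \text{ in } v\}}{|v|}$. ($\lambda$ is the dominant eigenvalue of the incidence matrix of $\varphi$.) A factor $w$ is right special if $wa,wb$ are factors of $\mathbf u$ for two distinct letters $a,b$, left special if $aw,bw$ are factors for two distinct letters, and bispecial if both. *)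

theory Defs
  imports Complex_Main
begin

fun phi :: "nat \<Rightarrow> nat list" where
  "phi n = (if n = 0 then [0,1,3,0] else if n = 1 then [1,0,2,1]
            else if n = 2 then [1,0,2] else [0,1,3])"

definition phiw :: "nat list \<Rightarrow> nat list" where
  "phiw w = concat (map phi w)"

text \<open>The fixed point starting with 0: the n-th letter is the n-th letter of
  phi^(n+1)(0), which has length greater than n and is a prefix of all
  further iterates.\<close>
definition u :: "nat \<Rightarrow> nat" where
  "u n = ((phiw ^^ (Suc n)) [0]) ! n"

definition factor :: "nat list \<Rightarrow> bool" where
  "factor w \<longleftrightarrow> (\<exists>i. w = map u [i..<i + length w])"

definition right_special :: "nat list \<Rightarrow> bool" where
  "right_special w \<longleftrightarrow> (\<exists>a b. a \<noteq> b \<and> factor (w @ [a]) \<and> factor (w @ [b]))"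

definition left_special :: "nat list \<Rightarrow> bool" where
  "left_special w \<longleftrightarrow> (\<exists>a b. a \<noteq> b \<and> factor (a # w) \<and> factor (b # w))"

definition bispecial :: "nat list \<Rightarrow> bool" where
  "bispecial w \<longleftrightarrow> left_special w \<and> right_special w"

definition occ :: "nat list \<Rightarrow> nat list \<Rightarrow> nat" where
  "occ w v = card {i. i + length w \<le> length v \<and> take (length w) (drop i v) = w}"

definition has_freq :: "nat list \<Rightarrow> real \<Rightarrow> bool" where
  "has_freq w r \<longleftrightarrow> (\<forall>e>0. \<exists>N. \<forall>v. factor v \<and> length v \<ge> N \<longrightarrow>
      \<bar>real (occ w v) / real (length v) - r\<bar> < e)"

definition rho :: "nat list \<Rightarrow> real" where
  "rho w = (THE r. has_freq w r)"

definition lam :: real where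
  "lam = 2 + sqrt 3"

definition p :: "nat \<Rightarrow> nat list" where
  "p a = (if a = 0 \<or> a = 2 then [1,0,2,1,0] else [0,1,3,0,1])"

end

theory Submission
  imports Defs
begin

text \<open>Since \<open>u = \<phi>(u)\<close>, the word \<open>u\<close> is the concatenation of the blocks \<open>\<phi>(u j)\<close>, and the
  letters 2 and 3 occur only as third letters of blocks.  A factor whose third letter from the left
  is not 2 or 3 has a unique left extension, and symmetrically on the right; so a bispecial factor
  longer than five letters carries a 2 or 3 near both ends, which pins it to the block structure:
  it is \<open>\<phi>(w)\<close> followed by the five letters \<open>p\<^sub>a\<close> that always follow a block \<open>\<phi>(a)\<close>, and its
  occurrences are exactly the images of the occurrences of the shorter bispecial factor \<open>w\<close>.

  For frequencies, every letter weight splits into its mean and eigenvector-like parts whose window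
  sums are \<open>O(\<surd>L)\<close>; hence block lengths average to \<open>\<lambda>\<close> uniformly, and a window of \<open>u\<close> of length
  \<open>L\<close> is the image of a window of about \<open>L/\<lambda>\<close> letters.  Counting occurrences of \<open>\<phi>(w)p\<^sub>a\<close> in the
  former is counting occurrences of \<open>w\<close> in the latter, which divides the frequency by \<open>\<lambda>\<close>;
  induction down to the six bispecial factors of length at most five gives existence.\<close>

section \<open>The fixed point as a concatenation of blocks\<close>

declare phi.simps[simp del]

lemma phi_simps[simp]:
  "phi 0 = [0,1,3,0]" "phi 1 = [1,0,2,1]" "phi (Suc 0) = [1,0,2,1]"
  "phi 2 = [1,0,2]" "phi 3 = [0,1,3]"
  by (simp_all add: phi.simps)

abbreviation phi_len :: "nat \<Rightarrow> nat" where
  "phi_len c \<equiv> length (phi c)"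

lemma phi_len_bounds: "3 \<le> phi_len c" "phi_len c \<le> 4"
  by (auto simp: phi.simps)

lemma phi_neq_Nil[simp]: "phi c \<noteq> []"
  using phi_len_bounds(1)[of c] by auto

lemma le_3_cases: "(c::nat) \<le> 3 \<Longrightarrow> c = 0 \<or> c = 1 \<or> c = 2 \<or> c = 3"
  by arith

lemma last_phi: "c \<le> 3 \<Longrightarrow> last (phi c) = c"
  using le_3_cases[of c] by auto

lemma phiw_Nil[simp]: "phiw [] = []"
  and phiw_Cons[simp]: "phiw (a # x) = phi a @ phiw x"
  and phiw_append[simp]: "phiw (x @ y) = phiw x @ phiw y"
  by (simp_all add: phiw_def)

lemma length_phiw_ge: "3 * length x \<le> length (phiw x)"
proof (induction x)
  case (Cons a x) then show ?case using phi_len_bounds(1)[of a] by simp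
qed simp

lemma length_phiw_le: "length (phiw x) \<le> 4 * length x"
proof (induction x)
  case (Cons a x) then show ?case using phi_len_bounds(2)[of a] by simp
qed simp

lemma set_phiw: "set (phiw x) \<subseteq> {0,1,2,3}"
  by (induction x) (auto simp: phi.simps)

lemma phiw_inj:
  assumes "\<forall>c\<in>set x. c \<le> 3" "\<forall>c\<in>set y. c \<le> 3" "phiw x = phiw y"
  shows "x = y"
  using assms
proof (induction x arbitrary: y rule: rev_induct)
  case Nil then show ?case by (cases y rule: rev_cases) auto
next
  case (snoc a x)
  obtain y' b where y: "y = y' @ [b]"
    using snoc.prems(3) by (cases y rule: rev_cases) auto
  have e: "phiw x @ phi a = phiw y' @ phi b" using snoc.prems(3) y by simp
  have ab: "a = b" using arg_cong[OF e, of last] snoc.prems(1,2) y by (simp add: last_phi)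
  have "x = y'" using snoc.prems(1,2) y e ab by (intro snoc.IH) auto
  then show ?case using ab y by simp
qed

definition phi_iter :: "nat \<Rightarrow> nat list" where
  "phi_iter k = (phiw ^^ k) [0]"

lemma phi_iter_Suc: "phi_iter (Suc k) = phiw (phi_iter k)"
  by (simp add: phi_iter_def)

lemma phi_iter_prefix_Suc: "\<exists>z. phi_iter (Suc k) = phi_iter k @ z"
proof (induction k)
  case 0 show ?case by (simp add: phi_iter_def)
next
  case (Suc k)
  then obtain z where "phi_iter (Suc k) = phi_iter k @ z" by blast
  then have "phi_iter (Suc (Suc k)) = phi_iter (Suc k) @ phiw z"
    by (simp add: phi_iter_Suc[of "Suc k"] phi_iter_Suc[of k])
  then show ?case by blast
qed

lemma phi_iter_prefix: "k \<le> m \<Longrightarrow> \<exists>z. phi_iter m = phi_iter k @ z"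
proof (induction m rule: dec_induct)
  case (step m)
  then show ?case using phi_iter_prefix_Suc[of m] by fastforce
qed simp

lemma length_phi_iter: "Suc k \<le> length (phi_iter k)"
proof (induction k)
  case 0 show ?case by (simp add: phi_iter_def)
next
  case (Suc k) then show ?case using length_phiw_ge[of "phi_iter k"] by (simp add: phi_iter_Suc)
qed

lemma u_phi_iter: "n < length (phi_iter k) \<Longrightarrow> u n = phi_iter k ! n"
proof -
  assume n: "n < length (phi_iter k)"
  let ?M = "max k (Suc n)"
  obtain z where z: "phi_iter ?M = phi_iter k @ z" using phi_iter_prefix[of k ?M] by auto
  obtain z' where z': "phi_iter ?M = phi_iter (Suc n) @ z'" using phi_iter_prefix[of "Suc n" ?M] by auto
  have "u n = phi_iter (Suc n) ! n" by (simp add: u_def phi_iter_def)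
  also have "\<dots> = phi_iter ?M ! n" using z' length_phi_iter[of "Suc n"] by (simp add: nth_append)
  also have "\<dots> = phi_iter k ! n" using z n by (simp add: nth_append)
  finally show ?thesis .
qed

lemma u_le_3: "u n \<le> 3"
proof -
  have "u n = phiw (phi_iter n) ! n" by (simp add: u_def phi_iter_def)
  moreover have "n < length (phiw (phi_iter n))" using length_phi_iter[of "Suc n"] by (simp add: phi_iter_Suc)
  ultimately show ?thesis using set_phiw[of "phi_iter n"] nth_mem by fastforce
qed

lemma u_cases: "u k = 0 \<or> u k = 1 \<or> u k = 2 \<or> u k = 3"
  using u_le_3[of k] by auto

text \<open>\<open>block_pos j\<close> is the position in \<open>u\<close> where the block \<open>\<phi>(u j)\<close> starts.\<close>

definition block_pos :: "nat \<Rightarrow> nat" where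
  "block_pos j = length (phiw (map u [0..<j]))"

lemma block_pos_0[simp]: "block_pos 0 = 0"
  by (simp add: block_pos_def)

lemma block_pos_Suc: "block_pos (Suc j) = block_pos j + phi_len (u j)"
  by (simp add: block_pos_def)

lemma block_pos_add: "j \<le> k \<Longrightarrow> block_pos k = block_pos j + length (phiw (map u [j..<k]))"
proof -
  assume "j \<le> k"
  then have "[0..<k] = [0..<j] @ [j..<k]" using upt_add_eq_append[of 0 j "k - j"] by simp
  then show ?thesis by (simp add: block_pos_def)
qed

lemma u_block_pos: "t < phi_len (u j) \<Longrightarrow> u (block_pos j + t) = phi (u j) ! t"
proof -
  assume t: "t < phi_len (u j)"
  have take: "take (Suc j) (phi_iter j) = map u [0..<Suc j]"
    using length_phi_iter[of j] by (intro nth_equalityI) (auto simp del: upt_Suc simp: u_phi_iter[of _ j])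
  have "phi_iter (Suc j) = phiw (take (Suc j) (phi_iter j)) @ phiw (drop (Suc j) (phi_iter j))"
    by (simp add: phi_iter_Suc flip: phiw_append)
  then have e: "phi_iter (Suc j) = phiw (map u [0..<j]) @ phi (u j) @ phiw (drop (Suc j) (phi_iter j))"
    by (simp add: take)
  have "block_pos j + t < length (phi_iter (Suc j))" using t by (simp add: e block_pos_def)
  then have "u (block_pos j + t) = phi_iter (Suc j) ! (block_pos j + t)" by (rule u_phi_iter)
  also have "\<dots> = phi (u j) ! t" using t by (simp add: e block_pos_def nth_append)
  finally show ?thesis .
qed

lemma strict_mono_block_pos: "strict_mono block_pos"
  unfolding strict_mono_Suc_iff using phi_len_bounds(1) by (simp add: block_pos_Suc Suc_le_eq)

lemma block_pos_less_iff[simp]: "block_pos a < block_pos b \<longleftrightarrow> a < b"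
  and block_pos_le_iff[simp]: "block_pos a \<le> block_pos b \<longleftrightarrow> a \<le> b"
  and block_pos_eq_iff[simp]: "block_pos a = block_pos b \<longleftrightarrow> a = b"
  using strict_mono_block_pos by (simp_all add: strict_mono_less strict_mono_less_eq strict_mono_eq)

lemma block_pos_diff_bounds:
  assumes "j \<le> k"
  shows "block_pos j + 3 * (k - j) \<le> block_pos k" "block_pos k \<le> block_pos j + 4 * (k - j)"
  using block_pos_add[OF assms] length_phiw_ge[of "map u [j..<k]"] length_phiw_le[of "map u [j..<k]"] by simp_all

lemma block_pos_decomp: "\<exists>k t. t < phi_len (u k) \<and> i = block_pos k + t"
proof -
  have ex: "\<exists>k. i < block_pos (Suc k)"
    using block_pos_diff_bounds(1)[of 0 "Suc i"] by (intro exI[of _ i]) simp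
  define k where "k = (LEAST k. i < block_pos (Suc k))"
  have k1: "i < block_pos (Suc k)" unfolding k_def by (rule LeastI_ex[OF ex])
  have k2: "block_pos k \<le> i"
  proof (cases k)
    case (Suc m)
    then have "\<not> i < block_pos (Suc m)" using not_less_Least[of m "\<lambda>k. i < block_pos (Suc k)"] k_def by simp
    then show ?thesis using Suc by simp
  qed simp
  show ?thesis using k1 k2 by (intro exI[of _ k] exI[of _ "i - block_pos k"]) (simp add: block_pos_Suc)
qed

lemma block_pos_decomp_unique:
  assumes "t < phi_len (u k)" "t' < phi_len (u k')" "block_pos k + t = block_pos k' + t'"
  shows "k = k' \<and> t = t'"
proof -
  have "\<not> k < k'" "\<not> k' < k"
    using assms block_pos_le_iff[of "Suc k" k'] block_pos_le_iff[of "Suc k'" k]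
    by (auto simp: block_pos_Suc)
  then show ?thesis using assms by simp
qed

lemma u_block_last: "u (block_pos (Suc k) - 1) = u k"
proof -
  have "block_pos (Suc k) - 1 = block_pos k + (phi_len (u k) - 1)"
    using phi_len_bounds(1)[of "u k"] by (simp add: block_pos_Suc)
  then show ?thesis
    using u_block_pos[of "phi_len (u k) - 1" k] last_phi[OF u_le_3] by (simp add: last_conv_nth)
qed

lemma map_u_block_pos: "j \<le> k \<Longrightarrow> map u [block_pos j..<block_pos k] = phiw (map u [j..<k])"
proof (induction k rule: dec_induct)
  case (step k)
  have "map u [block_pos k..<block_pos k + phi_len (u k)] = phi (u k)"
    by (rule nth_equalityI) (simp_all add: u_block_pos)
  moreover have "map u [block_pos j..<block_pos (Suc k)]
      = map u [block_pos j..<block_pos k] @ map u [block_pos k..<block_pos k + phi_len (u k)]"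
    using step(1) by (simp add: block_pos_Suc flip: map_append upt_add_eq_append)
  ultimately show ?case using step by simp
qed simp

section \<open>Short factors and special factors\<close>

definition adjacent :: "nat \<Rightarrow> nat \<Rightarrow> bool" where
  "adjacent a b \<longleftrightarrow> (a = 0 \<and> (b = 1 \<or> b = 2)) \<or> (a = 1 \<and> (b = 0 \<or> b = 3)) \<or> (a = 2 \<and> b = 1) \<or> (a = 3 \<and> b = 0)"

lemma adjacent_u: "adjacent (u i) (u (Suc i))"
proof (induction i rule: less_induct)
  case (less i)
  obtain k t where kt: "t < phi_len (u k)" "i = block_pos k + t" using block_pos_decomp by blast
  show ?case
  proof (cases "Suc t < phi_len (u k)")
    case True
    then show ?thesis using kt u_block_pos[of t k] u_block_pos[of "Suc t" k] u_cases[of k]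
      by (auto simp: adjacent_def less_Suc_eq)
  next
    case False
    then have i: "Suc i = block_pos (Suc k)" using kt by (simp add: block_pos_Suc)
    have "k < i" using kt phi_len_bounds(1)[of "u k"] block_pos_diff_bounds(1)[of 0 k] False by simp
    then have "adjacent (u k) (u (Suc k))" by (rule less.IH)
    moreover have "u i = u k" using u_block_last[of k] i by (metis diff_Suc_1)
    moreover have "u (Suc i) = phi (u (Suc k)) ! 0" using u_block_pos[of 0 "Suc k"] i by simp
    ultimately show ?thesis using u_cases[of "Suc k"] by (auto simp: adjacent_def)
  qed
qed

lemma u_2_3_iff: "u q = 2 \<or> u q = 3 \<longleftrightarrow> (\<exists>k. q = block_pos k + 2)"
proof
  assume h: "u q = 2 \<or> u q = 3"
  obtain k t where kt: "t < phi_len (u k)" "q = block_pos k + t" using block_pos_decomp by blast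
  then have "t = 2" using h u_block_pos[of t k] u_cases[of k] by (auto simp: less_Suc_eq)
  then show "\<exists>k. q = block_pos k + 2" using kt by auto
next
  assume "\<exists>k. q = block_pos k + 2"
  then obtain k where "q = block_pos k + 2" by auto
  then show "u q = 2 \<or> u q = 3"
    using u_block_pos[of 2 k] phi_len_bounds(1)[of "u k"] u_cases[of k] by auto
qed

definition three_blocks :: "nat \<Rightarrow> nat list" where
  "three_blocks k = phi (u k) @ phi (u (Suc k)) @ phi (u (Suc (Suc k)))"

lemma length_three_blocks: "9 \<le> length (three_blocks k)"
  using phi_len_bounds(1)[of "u k"] phi_len_bounds(1)[of "u (Suc k)"] phi_len_bounds(1)[of "u (Suc (Suc k))"]
  by (simp add: three_blocks_def)

lemma map_u_three_blocks: "map u [block_pos k..<block_pos k + length (three_blocks k)] = three_blocks k"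
proof -
  have "block_pos (Suc (Suc (Suc k))) = block_pos k + length (three_blocks k)"
    by (simp add: block_pos_Suc three_blocks_def)
  then show ?thesis using map_u_block_pos[of k "Suc (Suc (Suc k))"] by (simp add: three_blocks_def)
qed

lemma window_three_blocks:
  assumes "t < phi_len (u k)" "n \<le> 6"
  shows "map u [block_pos k + t..<block_pos k + t + n] = take n (drop t (three_blocks k))"
proof -
  have le: "t + n \<le> length (three_blocks k)"
    using assms length_three_blocks[of k] phi_len_bounds(2)[of "u k"] by linarith
  have "map u [block_pos k + t..<block_pos k + t + n]
      = take n (drop t (map u [block_pos k..<block_pos k + length (three_blocks k)]))"
    using le by (simp add: drop_map take_map add.assoc)
  then show ?thesis by (simp add: map_u_three_blocks)
qed

definition adjacent_triples :: "(nat \<times> nat \<times> nat) list" where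
  "adjacent_triples = [(0,1,0),(0,1,3),(0,2,1),(1,0,1),(1,0,2),(1,3,0),(2,1,0),(2,1,3),(3,0,1),(3,0,2)]"

lemma u_triple_mem: "(u k, u (Suc k), u (Suc (Suc k))) \<in> set adjacent_triples"
  using adjacent_u[of k] adjacent_u[of "Suc k"]
  unfolding adjacent_def by (elim disjE conjE) (simp_all add: adjacent_triples_def)

definition short_factors :: "nat \<Rightarrow> nat list list" where
  "short_factors n = concat (map (\<lambda>(c,d,e). map (\<lambda>t. take n (drop t (phi c @ phi d @ phi e))) [0..<phi_len c])
     adjacent_triples)"

lemma short_factors_mem:
  assumes "n \<le> 6"
  shows "map u [i..<i + n] \<in> set (short_factors n)"
proof -
  obtain k t where kt: "t < phi_len (u k)" "i = block_pos k + t" using block_pos_decomp by blast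
  then show ?thesis using window_three_blocks[OF kt(1) assms] u_triple_mem[of k]
    unfolding short_factors_def three_blocks_def by force
qed

lemma factor_short_factors: "factor w \<Longrightarrow> length w = n \<Longrightarrow> n \<le> 6 \<Longrightarrow> w \<in> set (short_factors n)"
  unfolding factor_def using short_factors_mem by metis

lemma short_factors_2: "set (short_factors 2) = {[0,1],[0,2],[1,0],[1,3],[2,1],[3,0]}"
  by (simp add: short_factors_def adjacent_triples_def insert_commute)

lemma short_factors_3:
  "set (short_factors 3) = {[0,1,0],[0,1,3],[0,2,1],[1,0,1],[1,0,2],[1,3,0],[2,1,0],[3,0,1]}"
  by (simp add: short_factors_def adjacent_triples_def insert_commute)

lemma short_factors_4:
  "set (short_factors 4) = {[0,1,0,2],[0,1,3,0],[0,2,1,0],[1,0,1,3],[1,0,2,1],[1,3,0,1],[2,1,0,1],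
     [2,1,0,2],[3,0,1,0],[3,0,1,3]}"
  by (simp add: short_factors_def adjacent_triples_def insert_commute)

lemma u_window_4: "[u i, u (Suc i), u (Suc (Suc i)), u (Suc (Suc (Suc i)))] \<in> set (short_factors 4)"
  using short_factors_mem[of 4 i] by (simp add: upt_rec numeral_eq_Suc)

definition occurs_at :: "nat list \<Rightarrow> nat \<Rightarrow> bool" where
  "occurs_at w i \<longleftrightarrow> map u [i..<i + length w] = w"

lemma factor_iff_occurs_at: "factor w \<longleftrightarrow> (\<exists>i. occurs_at w i)"
  unfolding factor_def occurs_at_def by metis

lemma occurs_at_Nil[simp]: "occurs_at [] i"
  by (simp add: occurs_at_def)

lemma occurs_at_Cons[simp]: "occurs_at (a # w) i \<longleftrightarrow> u i = a \<and> occurs_at w (Suc i)"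
  by (simp del: upt_Suc add: occurs_at_def upt_conv_Cons)

lemma occurs_at_append: "occurs_at (w @ w') i \<longleftrightarrow> occurs_at w i \<and> occurs_at w' (i + length w)"
  by (induction w arbitrary: i) simp_all

lemma occurs_at_nth: "occurs_at w i \<Longrightarrow> s < length w \<Longrightarrow> u (i + s) = w ! s"
proof (induction w arbitrary: i s)
  case (Cons a w)
  then show ?case using Cons.IH[of "Suc i" "s - 1"] by (cases s) auto
qed simp

lemma occurs_at_map_u: "occurs_at (map u [i..<k]) i"
  by (cases "i \<le> k") (simp_all add: occurs_at_def)

lemma occurs_at_letters: "occurs_at w i \<Longrightarrow> \<forall>c\<in>set w. c \<le> 3"
  using u_le_3 by (induction w arbitrary: i) fastforce+

lemma factor_letters: "factor w \<Longrightarrow> \<forall>c\<in>set w. c \<le> 3"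
  using occurs_at_letters by (auto simp: factor_iff_occurs_at)

lemma left_special_third_letter:
  assumes "left_special (c # d # e # x)"
  shows "e = 2 \<or> e = 3"
proof -
  obtain a b m m' where "a \<noteq> b" "occurs_at (a # c # d # e # x) m" "occurs_at (b # c # d # e # x) m'"
    using assms unfolding left_special_def factor_iff_occurs_at by blast
  then show ?thesis using u_window_4[of m] u_window_4[of m'] unfolding short_factors_4 by auto
qed

lemma right_special_third_last_letter:
  assumes "right_special (x @ [c, d, e])"
  shows "c = 2 \<or> c = 3"
proof -
  obtain a b m m' where "a \<noteq> b" "occurs_at (x @ [c, d, e, a]) m" "occurs_at (x @ [c, d, e, b]) m'"
    using assms unfolding right_special_def factor_iff_occurs_at by auto
  then show ?thesis using u_window_4[of "m + length x"] u_window_4[of "m' + length x"]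
    unfolding short_factors_4 by (auto simp: occurs_at_append)
qed

lemma u_after_block_5: "u (block_pos k + 5) = u k"
proof -
  have "u (block_pos k + 5) = three_blocks k ! 5"
    using arg_cong[OF map_u_three_blocks[of k], of "\<lambda>xs. xs ! 5"] length_three_blocks[of k] by simp
  then show ?thesis using u_triple_mem[of k] by (auto simp: three_blocks_def adjacent_triples_def)
qed

lemma map_u_block_pos_5: "map u [block_pos (Suc k)..<block_pos (Suc k) + 5] = p (u k)"
  using window_three_blocks[of 0 "Suc k" 5] u_triple_mem[of k]
  by (auto simp: three_blocks_def adjacent_triples_def p_def)

section \<open>Bispecial factors\<close>

lemma bispecial_aligned:
  assumes "factor v" "bispecial v" "5 \<le> length v"
  shows "\<exists>j k. occurs_at v (block_pos j) \<and> 0 < j \<and> block_pos k = block_pos j + (length v - 5)"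
proof -
  obtain a where "factor (a # v)" using assms(2) by (auto simp: bispecial_def left_special_def)
  then obtain m where occ: "occurs_at v (Suc m)" by (auto simp: factor_iff_occurs_at)
  obtain c d e x where cx: "v = c # d # e # x"
    using assms(3) by (auto simp: Suc_le_length_iff numeral_eq_Suc)
  define y z where "y = take (length v - 3) v" and "z = drop (length v - 3) v"
  have "length z = 3" using assms(3) by (simp add: z_def)
  then obtain c' d' e' where "z = [c', d', e']" by (auto simp: length_Suc_conv numeral_eq_Suc)
  then have yc: "v = y @ [c', d', e']" unfolding y_def by (metis append_take_drop_id z_def)
  have "u (Suc m + 2) = 2 \<or> u (Suc m + 2) = 3"
    using left_special_third_letter[of c d e x] occurs_at_nth[OF occ, of 2] assms(2) cx
    by (auto simp: bispecial_def)
  then obtain j where j: "Suc m = block_pos j" using u_2_3_iff by (metis add_right_cancel)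
  have "u (Suc m + length y) = 2 \<or> u (Suc m + length y) = 3"
    using right_special_third_last_letter[of y c' d' e'] occurs_at_nth[OF occ, of "length y"] assms(2) yc
    by (auto simp: bispecial_def)
  then obtain k where "Suc m + length y = block_pos k + 2" using u_2_3_iff by metis
  moreover have "length v = length y + 3" using yc by simp
  moreover have "0 < j" using j by (cases j) auto
  ultimately show ?thesis using occ j assms(3) by (intro exI[of _ j] exI[of _ k]) auto
qed

lemma bispecial_block_decomp:
  assumes "factor v" "bispecial v" "5 \<le> length v"
  shows "\<exists>j k. j \<le> k \<and> v = phiw (map u [Suc j..<Suc k]) @ p (u k)"
proof -
  obtain j k where occ: "occurs_at v (block_pos j)" and "0 < j"
    and pk: "block_pos k = block_pos j + (length v - 5)"
    using bispecial_aligned[OF assms] by blast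
  then have jk: "j \<le> k" using block_pos_le_iff by (metis le_add1)
  obtain j' k' where j': "j = Suc j'" and k': "k = Suc k'" using \<open>0 < j\<close> jk by (cases j; cases k) auto
  have "v = map u [block_pos j..<block_pos j + length v]" using occ by (simp add: occurs_at_def)
  also have "[block_pos j..<block_pos j + length v] = [block_pos j..<block_pos k] @ [block_pos k..<block_pos k + 5]"
    using pk assms(3) upt_add_eq_append[of "block_pos j" "block_pos k" 5] by simp
  finally have "v = phiw (map u [j..<k]) @ p (u k')"
    using map_u_block_pos[OF jk] map_u_block_pos_5[of k'] k' by simp
  then show ?thesis using j' k' jk by blast
qed

definition Phi :: "nat list \<Rightarrow> nat list" where
  "Phi w = phiw w @ p (last w)"

lemma length_p[simp]: "length (p a) = 5"
  by (simp add: p_def)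

lemma length_Phi: "length (Phi w) = length (phiw w) + 5"
  by (simp add: Phi_def)

lemma occurs_at_Phi:
  assumes "w \<noteq> []" "occurs_at w j"
  shows "occurs_at (Phi w) (block_pos j)"
proof -
  obtain k where k: "j + length w = Suc k" using assms(1) by (cases w) auto
  have w: "map u [j..<Suc k] = w" using assms(2) k by (simp add: occurs_at_def)
  have "j \<le> k" using k assms(1) by (cases w) auto
  then have "last w = u k" using w[symmetric] by simp
  moreover have "block_pos (Suc k) = block_pos j + length (phiw w)"
    using block_pos_add[of j "Suc k"] k w by simp
  ultimately show ?thesis
    using map_u_block_pos[of j "Suc k"] map_u_block_pos_5[of k] k w
    unfolding Phi_def occurs_at_append by (simp add: occurs_at_def)
qed

lemma occurs_at_Phi_imp:
  assumes "w \<noteq> []" "\<forall>c\<in>set w. c \<le> 3" "occurs_at (Phi w) x"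
  shows "\<exists>j. x = block_pos j \<and> occurs_at w j"
proof -
  obtain a w' where w: "w = a # w'" using assms(1) by (cases w) auto
  have "u (x + 2) = phi a ! 2"
    using occurs_at_nth[OF assms(3), of 2] phi_len_bounds(1)[of a] by (simp add: Phi_def w nth_append)
  then have "u (x + 2) = 2 \<or> u (x + 2) = 3" by (auto simp: phi.simps)
  then obtain j where j: "x = block_pos j" using u_2_3_iff by (metis add_right_cancel)
  have "u (x + length (phiw w) + 2) = p (last w) ! 2"
    using occurs_at_nth[OF assms(3), of "length (phiw w) + 2"] by (simp add: Phi_def nth_append add.assoc)
  then have "u (x + length (phiw w) + 2) = 2 \<or> u (x + length (phiw w) + 2) = 3" by (simp add: p_def)
  then obtain k where "x + length (phiw w) = block_pos k" using u_2_3_iff by (metis add_right_cancel)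
  then have pk: "block_pos k = block_pos j + length (phiw w)" using j by simp
  then have jk: "j \<le> k" using block_pos_le_iff by (metis le_add1)
  have "occurs_at (phiw w) (block_pos j)" using assms(3) j by (simp add: Phi_def occurs_at_append)
  then have "phiw (map u [j..<k]) = phiw w"
    using map_u_block_pos[OF jk] pk by (simp add: occurs_at_def)
  then have mw: "map u [j..<k] = w" using phiw_inj[of "map u [j..<k]" w] assms(2) u_le_3 by auto
  then have "occurs_at w j" using jk by (auto simp: occurs_at_def)
  then show ?thesis using j by blast
qed

lemma occurs_at_Phi_iff:
  assumes "w \<noteq> []" "\<forall>c\<in>set w. c \<le> 3"
  shows "occurs_at (Phi w) x \<longleftrightarrow> (\<exists>j. x = block_pos j \<and> occurs_at w j)"
  using occurs_at_Phi_imp[OF assms] occurs_at_Phi[OF assms(1)] by blast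

lemma bispecial_Phi_imp:
  assumes "w \<noteq> []" "factor w" "bispecial (Phi w)"
  shows "bispecial w"
proof -
  have letters: "\<forall>c\<in>set w. c \<le> 3" using factor_letters[OF assms(2)] .
  have left: "factor (a # w)" if ext: "factor (a # Phi w)" for a
  proof -
    obtain m where m: "u m = a" "occurs_at (Phi w) (Suc m)" using ext by (auto simp: factor_iff_occurs_at)
    then obtain j where j: "Suc m = block_pos j" "occurs_at w j"
      using occurs_at_Phi_imp[OF assms(1) letters] by blast
    then obtain j' where j': "j = Suc j'" by (cases j) auto
    have "u j' = a" using u_block_last[of j'] j(1) j' m(1) by (metis diff_Suc_1)
    then have "occurs_at (a # w) j'" using j(2) j' by simp
    then show ?thesis by (auto simp: factor_iff_occurs_at)
  qed
  have right: "factor (w @ [a])" if ext: "factor (Phi w @ [a])" for a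
  proof -
    obtain m where "occurs_at (Phi w) m" "u (m + length (Phi w)) = a"
      using ext by (auto simp: factor_iff_occurs_at occurs_at_append)
    moreover obtain j where j: "m = block_pos j" "occurs_at w j"
      using occurs_at_Phi_imp[OF assms(1) letters] calculation(1) by blast
    moreover have "m + length (Phi w) = block_pos (j + length w) + 5"
      using block_pos_add[of j "j + length w"] j by (simp add: length_Phi occurs_at_def)
    ultimately have "occurs_at (w @ [a]) j" using u_after_block_5 by (simp add: occurs_at_append)
    then show ?thesis by (auto simp: factor_iff_occurs_at)
  qed
  show ?thesis using assms(3) left right unfolding bispecial_def left_special_def right_special_def by blast
qed

lemma short_bispecials:
  assumes "factor w" "bispecial w" "w \<noteq> []" "length w \<le> 5"
  shows "w \<in> {[0], [1], [0,1], [1,0], [0,1,3,0,1], [1,0,2,1,0]}"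
proof -
  have ls: "left_special w" and rs: "right_special w" using assms(2) by (auto simp: bispecial_def)
  have "length w = 1 \<or> length w = 2 \<or> length w = 3 \<or> length w = 4 \<or> length w = 5"
  proof -
    have "length w \<noteq> 0" using assms(3) by simp
    then show ?thesis using assms(4) by arith
  qed
  then consider "length w = 1" | "length w = 2" | "length w = 3" | "length w = 4" | "length w = 5"
    by blast
  then show ?thesis
  proof cases
    case 1
    then obtain x where w: "w = [x]" by (auto simp: length_Suc_conv)
    obtain a b where "a \<noteq> b" "factor [a, x]" "factor [b, x]" using ls w by (auto simp: left_special_def)
    then show ?thesis using factor_short_factors[of "[a, x]" 2] factor_short_factors[of "[b, x]" 2] w
      unfolding short_factors_2 by auto
  next
    case 2
    then obtain x y where w: "w = [x, y]" by (auto simp: length_Suc_conv numeral_eq_Suc)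
    obtain a b where "a \<noteq> b" "factor [a, x, y]" "factor [b, x, y]" using ls w by (auto simp: left_special_def)
    then show ?thesis using factor_short_factors[of "[a, x, y]" 3] factor_short_factors[of "[b, x, y]" 3] w
      unfolding short_factors_3 by auto
  next
    case 3
    then obtain x y z where w: "w = [x, y, z]" by (auto simp: length_Suc_conv numeral_eq_Suc)
    have "z = 2 \<or> z = 3" using left_special_third_letter[of x y z "[]"] ls w by simp
    moreover have "x = 2 \<or> x = 3" using right_special_third_last_letter[of "[]" x y z] rs w by simp
    moreover have "w \<in> set (short_factors 3)" using factor_short_factors[OF assms(1) 3] by simp
    ultimately show ?thesis using w unfolding short_factors_3 by auto
  next
    case 4
    then obtain x y z t where w: "w = [x, y, z, t]" by (auto simp: length_Suc_conv numeral_eq_Suc)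
    have "z = 2 \<or> z = 3" using left_special_third_letter[of x y z "[t]"] ls w by simp
    moreover have "y = 2 \<or> y = 3" using right_special_third_last_letter[of "[x]" y z t] rs w by simp
    moreover have "w \<in> set (short_factors 4)" using factor_short_factors[OF assms(1) 4] by simp
    ultimately show ?thesis using w unfolding short_factors_4 by auto
  next
    case 5
    then have "5 \<le> length w" by simp
    then obtain j k where "w = phiw (map u [Suc j..<Suc k]) @ p (u k)"
      using bispecial_block_decomp[OF assms(1,2)] by blast
    moreover from this have "phiw (map u [Suc j..<Suc k]) = []"
      using 5 by (metis add_cancel_right_left length_0_conv length_append length_p)
    ultimately show ?thesis by (simp add: p_def)
  qed
qed

lemma bispecial_eq_Phi:
  assumes "factor v" "bispecial v" "5 < length v"
  shows "\<exists>w. factor w \<and> w \<noteq> [] \<and> v = Phi w \<and> length w < length v"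
proof -
  obtain j k where jk: "j \<le> k" and v: "v = phiw (map u [Suc j..<Suc k]) @ p (u k)"
    using bispecial_block_decomp[OF assms(1,2) less_imp_le[OF assms(3)]] by blast
  define w where "w = map u [Suc j..<Suc k]"
  have "j \<noteq> k" using v assms(3) by auto
  then have "w \<noteq> []" "last w = u k" using jk by (simp_all add: w_def)
  moreover have "factor w" unfolding w_def factor_iff_occurs_at using occurs_at_map_u by blast
  moreover have "v = Phi w" using v calculation(2) by (simp add: Phi_def w_def)
  moreover have "length w < length v"
    using length_phiw_ge[of w] calculation(4) by (simp add: length_Phi)
  ultimately show ?thesis by blast
qed

section \<open>Discrepancy of letter weights\<close>

lemma abs_sum_atLeastLessThan_le:
  fixes F :: "nat \<Rightarrow> real"
  assumes "\<And>k. \<bar>F k\<bar> \<le> B"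
  shows "\<bar>sum F {m..<n}\<bar> \<le> real (n - m) * B"
proof -
  have "\<bar>sum F {m..<n}\<bar> \<le> sum (\<lambda>k. \<bar>F k\<bar>) {m..<n}" by (rule sum_abs)
  also have "\<dots> \<le> real (card {m..<n}) * B" by (rule sum_bounded_above) (use assms in auto)
  finally show ?thesis by simp
qed

lemma sum_block_pos_split:
  fixes F :: "nat \<Rightarrow> 'a::comm_monoid_add"
  assumes "a \<le> b"
  shows "sum F {block_pos a..<block_pos b} = (\<Sum>j\<in>{a..<b}. \<Sum>t<phi_len (u j). F (block_pos j + t))"
  using assms
proof (induction b rule: dec_induct)
  case (step b)
  have "sum F {block_pos b..<block_pos (Suc b)} = (\<Sum>t<phi_len (u b). F (block_pos b + t))"
  proof -
    have "sum F {block_pos b..<block_pos (Suc b)} = sum F {0 + block_pos b..<phi_len (u b) + block_pos b}"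
      by (simp add: block_pos_Suc add.commute)
    also have "\<dots> = sum (\<lambda>t. F (t + block_pos b)) {0..<phi_len (u b)}"
      by (rule sum.shift_bounds_nat_ivl)
    finally show ?thesis by (simp add: lessThan_atLeast0 add.commute)
  qed
  moreover have "sum F {block_pos a..<block_pos (Suc b)} = sum F {block_pos a..<block_pos b} + sum F {block_pos b..<block_pos (Suc b)}"
    using step(1) by (simp add: sum.atLeastLessThan_concat)
  ultimately show ?case using step by simp
qed simp

definition next_block :: "nat \<Rightarrow> nat" where
  "next_block i = (LEAST j. i \<le> block_pos j)"

lemma next_block_bounds: "i \<le> block_pos (next_block i)" "block_pos (next_block i) \<le> i + 3"
proof -
  have "i \<le> block_pos i" using block_pos_diff_bounds(1)[of 0 i] by simp
  then show le: "i \<le> block_pos (next_block i)" unfolding next_block_def by (rule LeastI)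
  show "block_pos (next_block i) \<le> i + 3"
  proof (cases "next_block i")
    case (Suc m)
    then have "\<not> i \<le> block_pos m" using not_less_Least[of m "\<lambda>j. i \<le> block_pos j"] unfolding next_block_def by simp
    then show ?thesis using Suc phi_len_bounds(2)[of "u m"] by (simp add: block_pos_Suc)
  qed simp
qed

lemma next_block_mono: "i \<le> i' \<Longrightarrow> next_block i \<le> next_block i'"
  unfolding next_block_def by (rule Least_le) (use next_block_bounds(1)[of i'] in \<open>simp add: next_block_def\<close>)

lemma sum_window_to_blocks:
  fixes F :: "nat \<Rightarrow> real"
  assumes "\<And>k. \<bar>F k\<bar> \<le> B"
  shows "\<bar>sum F {i..<i+L} - sum F {block_pos (next_block i)..<block_pos (next_block (i+L))}\<bar> \<le> 6 * B"
proof -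
  let ?a = "block_pos (next_block i)" and ?b = "block_pos (next_block (i+L))"
  have h: "i \<le> ?a" "?a \<le> i + 3" "i + L \<le> ?b" "?b \<le> i + L + 3" "?a \<le> ?b"
    using next_block_bounds next_block_mono[of i "i + L"] by auto
  have "sum F {i..<?b} = sum F {i..<?a} + sum F {?a..<?b}" "sum F {i..<?b} = sum F {i..<i+L} + sum F {i+L..<?b}"
    using h by (simp_all add: sum.atLeastLessThan_concat)
  moreover have "\<bar>sum F {i..<?a}\<bar> \<le> 3 * B" "\<bar>sum F {i+L..<?b}\<bar> \<le> 3 * B"
  proof -
    have "real (?a - i) \<le> 3" "real (?b - (i + L)) \<le> 3" "0 \<le> B" using h assms[of 0] by auto
    then show "\<bar>sum F {i..<?a}\<bar> \<le> 3 * B" "\<bar>sum F {i+L..<?b}\<bar> \<le> 3 * B"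
      using abs_sum_atLeastLessThan_le[where F=F and B=B and m=i and n="?a", OF assms]
        abs_sum_atLeastLessThan_le[where F=F and B=B and m="i+L" and n="?b", OF assms]
      by (meson mult_right_mono order_trans)+
  qed
  ultimately show ?thesis by linarith
qed

definition window_sum :: "(nat \<Rightarrow> real) \<Rightarrow> nat \<Rightarrow> nat \<Rightarrow> real" where
  "window_sum q i L = (\<Sum>k\<in>{i..<i+L}. q (u k))"

definition phi_sum :: "(nat \<Rightarrow> real) \<Rightarrow> nat \<Rightarrow> real" where
  "phi_sum q c = sum_list (map q (phi c))"

lemma window_sum_desubst:
  fixes i L :: nat
  assumes "\<And>c. \<bar>q c\<bar> \<le> B"
  defines "a \<equiv> next_block i" and "L' \<equiv> next_block (i+L) - next_block i"
  shows "\<bar>window_sum q i L - window_sum (phi_sum q) a L'\<bar> \<le> 6 * B" and "3 * L' \<le> L + 3"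
proof -
  have ab: "a \<le> a + L'" "next_block (i+L) = a + L'"
    using next_block_mono[of i "i+L"] unfolding a_def L'_def by simp_all
  have "sum (\<lambda>k. q (u k)) {block_pos a..<block_pos (a + L')}
      = (\<Sum>j\<in>{a..<a+L'}. \<Sum>t<phi_len (u j). q (u (block_pos j + t)))"
    by (rule sum_block_pos_split[OF ab(1)])
  also have "\<dots> = window_sum (phi_sum q) a L'"
    unfolding window_sum_def phi_sum_def
    by (rule sum.cong) (simp_all add: u_block_pos sum_list_sum_nth atLeast0LessThan)
  finally show "\<bar>window_sum q i L - window_sum (phi_sum q) a L'\<bar> \<le> 6 * B"
    using sum_window_to_blocks[of "\<lambda>k. q (u k)" B i L] assms(1) ab(2) by (simp add: window_sum_def a_def)
  have "block_pos a + 3 * L' \<le> block_pos (a + L')" using block_pos_diff_bounds(1)[OF ab(1)] by simp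
  moreover have "block_pos (a + L') \<le> i + L + 3" using next_block_bounds(2)[of "i+L"] ab(2) by simp
  moreover have "i \<le> block_pos a" using next_block_bounds(1)[of i] by (simp add: a_def)
  ultimately show "3 * L' \<le> L + 3" by linarith
qed

lemma window_sum_cong: "(\<And>c. c \<le> 3 \<Longrightarrow> q c = q' c) \<Longrightarrow> window_sum q i L = window_sum q' i L"
  unfolding window_sum_def by (rule sum.cong) (simp_all add: u_le_3)

lemma window_sum_add: "window_sum (\<lambda>c. f c + g c) i L = window_sum f i L + window_sum g i L"
  and window_sum_diff: "window_sum (\<lambda>c. f c - g c) i L = window_sum f i L - window_sum g i L"
  and window_sum_mult: "window_sum (\<lambda>c. a * f c) i L = a * window_sum f i L"
  and window_sum_const: "window_sum (\<lambda>c. a) i L = a * real L"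
  unfolding window_sum_def by (simp_all add: sum.distrib sum_subtractf sum_distrib_left)

lemma abs_window_sum_le: "(\<And>c. \<bar>q c\<bar> \<le> B) \<Longrightarrow> \<bar>window_sum q i L\<bar> \<le> B * real L"
  unfolding window_sum_def using abs_sum_atLeastLessThan_le[of "\<lambda>k. q (u k)" B i "i+L"] by (simp add: mult.commute)

text \<open>If every window sum is controlled by one of a third of the length plus \<open>O(\<surd>L')\<close>,
  the recursion yields the bound \<open>K \<surd>L\<close>, since \<open>\<surd>(L'/L) \<le> 2/3\<close> once \<open>L > 9\<close>.\<close>

lemma sqrt_bound_by_contraction:
  fixes Q :: "nat \<Rightarrow> nat \<Rightarrow> real"
  assumes C: "\<And>i L. \<bar>Q i L\<bar> \<le> C * real L" and nonneg: "C \<ge> 0" "ca \<ge> 0" "cb \<ge> 0"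
    and rec: "\<And>i L. \<exists>i' L'. 3 * L' \<le> L + 3 \<and> \<bar>Q i L\<bar> \<le> \<bar>Q i' L'\<bar> + ca * sqrt (real L') + cb"
  shows "\<exists>K. \<forall>i L. \<bar>Q i L\<bar> \<le> K * sqrt (real L)"
proof -
  define K where "K = 3 * C + 3 * (ca + cb)"
  have K0: "K \<ge> 0" using nonneg by (simp add: K_def)
  have "\<bar>Q i L\<bar> \<le> K * sqrt (real L)" for i L
  proof (induction L arbitrary: i rule: less_induct)
    case (less L)
    show ?case
    proof (cases "L \<le> 9")
      case True
      then have "sqrt (real L) \<le> 3" by (simp add: real_sqrt_le_iff[of _ 9, simplified])
      then have "real L \<le> 3 * sqrt (real L)" using mult_right_mono[of "sqrt (real L)" 3 "sqrt (real L)"] by simp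
      then have "C * real L \<le> C * (3 * sqrt (real L))" using nonneg(1) by (simp add: mult_left_mono)
      also have "\<dots> \<le> K * sqrt (real L)" using nonneg by (simp add: K_def algebra_simps)
      finally show ?thesis using C[of i L] by linarith
    next
      case False
      obtain i' L' where r: "3 * L' \<le> L + 3" "\<bar>Q i L\<bar> \<le> \<bar>Q i' L'\<bar> + ca * sqrt (real L') + cb"
        using rec by blast
      have LL: "L' < L" using r(1) False by linarith
      have "real L' \<le> (2/3)^2 * real L" using r(1) False by (simp add: power2_eq_square)
      then have s1: "sqrt (real L') \<le> (2/3) * sqrt (real L)"
        by (metis real_sqrt_le_mono real_sqrt_mult real_sqrt_pow2_iff real_sqrt_power zero_le_divide_iff
            zero_le_numeral power2_eq_square real_sqrt_abs abs_of_nonneg)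
      have s2: "sqrt (real L') \<le> sqrt (real L)" "1 \<le> sqrt (real L)" using LL False by simp_all
      have "\<bar>Q i L\<bar> \<le> K * ((2/3) * sqrt (real L)) + ca * sqrt (real L) + cb * sqrt (real L)"
        using r(2) less.IH[OF LL, of i'] mult_left_mono[OF s1 K0] mult_left_mono[OF s2(1) nonneg(2)]
          mult_left_mono[OF s2(2) nonneg(3)] by linarith
      also have "\<dots> = (2/3 * K + ca + cb) * sqrt (real L)" by (simp add: algebra_simps)
      also have "\<dots> \<le> K * sqrt (real L)" by (rule mult_right_mono) (use nonneg in \<open>simp_all add: K_def\<close>)
      finally show ?thesis .
    qed
  qed
  then show ?thesis by blast
qed

lemma window_sum_sqrt_bound:
  assumes "\<And>c. \<bar>q c\<bar> \<le> B" and "K' \<ge> 0"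
    and "\<And>i L. \<bar>window_sum (phi_sum q) i L\<bar> \<le> \<bar>window_sum q i L\<bar> + K' * sqrt (real L)"
  shows "\<exists>K. \<forall>i L. \<bar>window_sum q i L\<bar> \<le> K * sqrt (real L)"
proof (rule sqrt_bound_by_contraction[where C=B and ca=K' and cb="6 * B"])
  have B: "B \<ge> 0" using assms(1)[of 0] by simp
  show "\<bar>window_sum q i L\<bar> \<le> B * real L" for i L using abs_window_sum_le[OF assms(1)] .
  show "B \<ge> 0" "K' \<ge> 0" "6 * B \<ge> 0" using B assms(2) by simp_all
  show "\<exists>i' L'. 3 * L' \<le> L + 3 \<and> \<bar>window_sum q i L\<bar> \<le> \<bar>window_sum q i' L'\<bar> + K' * sqrt (real L') + 6 * B"
    for i L
  proof (intro exI conjI)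
    let ?a = "next_block i" and ?L' = "next_block (i + L) - next_block i"
    show "3 * ?L' \<le> L + 3" using window_sum_desubst(2)[where q=q and B=B and i=i and L=L, OF assms(1)] .
    show "\<bar>window_sum q i L\<bar> \<le> \<bar>window_sum q ?a ?L'\<bar> + K' * sqrt (real ?L') + 6 * B"
      using window_sum_desubst(1)[where q=q and B=B and i=i and L=L, OF assms(1)] assms(3)[of ?a ?L'] by linarith
  qed
qed

text \<open>Besides the constants, these weights span all letter weights.  Under \<open>q \<mapsto> phi_sum q\<close>
  they behave like eigenvectors of the incidence matrix of \<open>\<phi>\<close>, for the eigenvalue 1 (with a
  Jordan block) and the eigenvalue \<open>2 - \<surd>3 = 1/\<lambda>\<close>, so their window sums are \<open>O(\<surd>L)\<close>.\<close>

definition weight01 :: "nat \<Rightarrow> real" where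
  "weight01 c = (if c = 0 then 1 else if c = 1 then -1 else 0)"

definition weight23 :: "nat \<Rightarrow> real" where
  "weight23 c = (if c = 2 then 1 else if c = 3 then -1 else 0)"

definition weight_decay :: "nat \<Rightarrow> real" where
  "weight_decay c = (if c \<le> 1 then 1 else - (1 + sqrt 3))"

lemma window_sum_weight01: "\<exists>K. \<forall>i L. \<bar>window_sum weight01 i L\<bar> \<le> K * sqrt (real L)"
proof (rule window_sum_sqrt_bound[where B=1 and K'=0])
  show "\<bar>weight01 c\<bar> \<le> 1" for c by (simp add: weight01_def)
  have "window_sum (phi_sum weight01) i L = window_sum weight01 i L" for i L
    by (rule window_sum_cong) (auto dest!: le_3_cases simp: phi_sum_def weight01_def)
  then show "\<bar>window_sum (phi_sum weight01) i L\<bar> \<le> \<bar>window_sum weight01 i L\<bar> + 0 * sqrt (real L)" for i L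
    by simp
qed simp

lemma window_sum_weight23: "\<exists>K. \<forall>i L. \<bar>window_sum weight23 i L\<bar> \<le> K * sqrt (real L)"
proof -
  obtain K where K: "\<And>i L. \<bar>window_sum weight01 i L\<bar> \<le> K * sqrt (real L)"
    using window_sum_weight01 by blast
  show ?thesis
  proof (rule window_sum_sqrt_bound[where B=1 and K'=K])
    show "\<bar>weight23 c\<bar> \<le> 1" for c by (simp add: weight23_def)
    have "\<bar>window_sum weight01 0 1\<bar> \<le> K" using K[of 0 1] by simp
    then show "K \<ge> 0" by linarith
    have "window_sum (phi_sum weight23) i L = window_sum (\<lambda>c. weight23 c - weight01 c) i L" for i L
      by (rule window_sum_cong) (auto dest!: le_3_cases simp: phi_sum_def weight01_def weight23_def)
    then show "\<bar>window_sum (phi_sum weight23) i L\<bar> \<le> \<bar>window_sum weight23 i L\<bar> + K * sqrt (real L)" for i L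
      using K[of i L] abs_triangle_ineq4[of "window_sum weight23 i L" "window_sum weight01 i L"]
      by (simp add: window_sum_diff)
  qed
qed

lemma window_sum_weight_decay: "\<exists>K. \<forall>i L. \<bar>window_sum weight_decay i L\<bar> \<le> K * sqrt (real L)"
proof (rule window_sum_sqrt_bound[where B="1 + sqrt 3" and K'=0])
  show "\<bar>weight_decay c\<bar> \<le> 1 + sqrt 3" for c by (simp add: weight_decay_def abs_if)
  have "window_sum (phi_sum weight_decay) i L = window_sum (\<lambda>c. (2 - sqrt 3) * weight_decay c) i L" for i L
    by (rule window_sum_cong) (auto dest!: le_3_cases simp: phi_sum_def weight_decay_def algebra_simps)
  moreover have "\<bar>(2 - sqrt 3) * x\<bar> \<le> \<bar>x\<bar>" for x :: real
  proof -
    have "sqrt 3 \<le> 2" "1 \<le> sqrt 3" by (simp_all add: real_sqrt_le_iff[of 3 4, simplified])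
    then show ?thesis by (simp add: abs_mult mult_left_le_one_le)
  qed
  ultimately show "\<bar>window_sum (phi_sum weight_decay) i L\<bar> \<le> \<bar>window_sum weight_decay i L\<bar> + 0 * sqrt (real L)" for i L
    by (simp add: window_sum_mult)
qed simp

text \<open>The letter frequencies of \<open>u\<close> are \<open>(\<surd>3 - 1)/2\<close> for 0 and 1 and \<open>(2 - \<surd>3)/2\<close> for 2 and 3.\<close>

definition mean :: "(nat \<Rightarrow> real) \<Rightarrow> real" where
  "mean q = (q 0 + q 1) * (sqrt 3 - 1) / 2 + (q 2 + q 3) * (2 - sqrt 3) / 2"

lemma weight_decomp:
  assumes "c \<le> 3"
  shows "q c = mean q + (q 0 - q 1) / 2 * weight01 c + (q 2 - q 3) / 2 * weight23 c
            + (q 0 + q 1 - q 2 - q 3) * (2 - sqrt 3) / 2 * weight_decay c"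
proof -
  have s3: "sqrt 3 * (sqrt 3 * x) = 3 * x" for x :: real by (simp flip: mult.assoc)
  show ?thesis using le_3_cases[OF assms]
    by (auto simp: mean_def weight01_def weight23_def weight_decay_def field_simps s3)
qed

lemma window_sum_mean: "\<exists>K. \<forall>i L. \<bar>window_sum q i L - mean q * real L\<bar> \<le> K * sqrt (real L)"
proof -
  obtain K1 K2 K3 where
    K1: "\<And>i L. \<bar>window_sum weight01 i L\<bar> \<le> K1 * sqrt (real L)" and
    K2: "\<And>i L. \<bar>window_sum weight23 i L\<bar> \<le> K2 * sqrt (real L)" and
    K3: "\<And>i L. \<bar>window_sum weight_decay i L\<bar> \<le> K3 * sqrt (real L)"
    using window_sum_weight01 window_sum_weight23 window_sum_weight_decay by metis
  define b1 b2 b3 where "b1 = (q 0 - q 1) / 2" and "b2 = (q 2 - q 3) / 2"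
    and "b3 = (q 0 + q 1 - q 2 - q 3) * (2 - sqrt 3) / 2"
  show ?thesis
  proof (intro exI allI)
    fix i L
    have "window_sum q i L = window_sum (\<lambda>c. mean q + b1 * weight01 c + b2 * weight23 c + b3 * weight_decay c) i L"
      by (rule window_sum_cong) (unfold b1_def b2_def b3_def, erule weight_decomp)
    then have e: "window_sum q i L - mean q * real L
        = b1 * window_sum weight01 i L + b2 * window_sum weight23 i L + b3 * window_sum weight_decay i L"
      by (simp add: window_sum_add window_sum_mult window_sum_const)
    have "\<bar>b1 * window_sum weight01 i L\<bar> \<le> \<bar>b1\<bar> * (K1 * sqrt (real L))"
      "\<bar>b2 * window_sum weight23 i L\<bar> \<le> \<bar>b2\<bar> * (K2 * sqrt (real L))"
      "\<bar>b3 * window_sum weight_decay i L\<bar> \<le> \<bar>b3\<bar> * (K3 * sqrt (real L))"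
      unfolding abs_mult by (simp_all add: mult_left_mono K1 K2 K3)
    then show "\<bar>window_sum q i L - mean q * real L\<bar> \<le> (\<bar>b1\<bar> * K1 + \<bar>b2\<bar> * K2 + \<bar>b3\<bar> * K3) * sqrt (real L)"
      unfolding e distrib_right mult.assoc by linarith
  qed
qed

section \<open>Uniform frequencies\<close>

text \<open>Convergence of window averages uniformly in the window position, phrased with arbitrary
  sequences of windows \<open>[I n, I n + Ls n)\<close> of diverging length.\<close>

definition uniform_mean :: "(nat \<Rightarrow> real) \<Rightarrow> real \<Rightarrow> bool" where
  "uniform_mean g r \<longleftrightarrow> (\<forall>I Ls. filterlim Ls at_top sequentially \<longrightarrow>
      ((\<lambda>n. (\<Sum>k\<in>{I n..<I n + Ls n}. g k) / real (Ls n)) \<longlongrightarrow> r) sequentially)"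

lemma eventually_ge_of_filterlim:
  "filterlim (Ls :: nat \<Rightarrow> nat) at_top sequentially \<Longrightarrow> eventually (\<lambda>n. m \<le> Ls n) sequentially"
  unfolding filterlim_at_top by blast

lemma filterlim_real_of_nat_at_top:
  "filterlim Ls at_top sequentially \<Longrightarrow> filterlim (\<lambda>n. real (Ls n)) at_top sequentially"
  by (rule filterlim_compose[OF filterlim_real_sequentially])

lemma bounded_divide_tendsto_0:
  assumes "\<And>n. \<bar>x n\<bar> \<le> C" "filterlim (Ls :: nat \<Rightarrow> nat) at_top sequentially"
  shows "((\<lambda>n. x n / real (Ls n)) \<longlongrightarrow> 0) sequentially"
proof (rule tendsto_0_le[where K=1])
  show "((\<lambda>n. C / real (Ls n)) \<longlongrightarrow> 0) sequentially"
    by (rule tendsto_divide_0[OF tendsto_const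
          filterlim_at_top_imp_at_infinity[OF filterlim_real_of_nat_at_top[OF assms(2)]]])
  show "eventually (\<lambda>n. norm (x n / real (Ls n)) \<le> norm (C / real (Ls n)) * 1) sequentially"
    using eventually_ge_of_filterlim[OF assms(2), of 1]
  proof eventually_elim
    case (elim n)
    have "\<bar>x n\<bar> / real (Ls n) \<le> \<bar>C\<bar> / real (Ls n)"
      using assms(1)[of n] abs_ge_self[of C] by (intro divide_right_mono) auto
    then show ?case by simp
  qed
qed

lemma tendsto_ratio_1_of_bounded_diff:
  assumes "\<And>n. \<bar>x n - real (Ls n)\<bar> \<le> C" "filterlim (Ls :: nat \<Rightarrow> nat) at_top sequentially"
  shows "((\<lambda>n. x n / real (Ls n)) \<longlongrightarrow> 1) sequentially"
proof -
  have "((\<lambda>n. 1 + (x n - real (Ls n)) / real (Ls n)) \<longlongrightarrow> 1 + 0) sequentially"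
    by (intro tendsto_add tendsto_const bounded_divide_tendsto_0[OF assms])
  moreover have "eventually (\<lambda>n. 1 + (x n - real (Ls n)) / real (Ls n) = x n / real (Ls n)) sequentially"
    using eventually_ge_of_filterlim[OF assms(2), of 1] by eventually_elim (simp add: field_simps)
  ultimately show ?thesis using tendsto_cong by fastforce
qed

lemma uniform_mean_of_sqrt_discrepancy:
  assumes "\<And>i L. \<bar>(\<Sum>k\<in>{i..<i+L}. g k) - r * real L\<bar> \<le> K * sqrt (real L)"
  shows "uniform_mean g r"
  unfolding uniform_mean_def
proof (intro allI impI)
  fix I Ls :: "nat \<Rightarrow> nat"
  assume L: "filterlim Ls at_top sequentially"
  have "((\<lambda>n. K / sqrt (real (Ls n))) \<longlongrightarrow> 0) sequentially"
    by (intro tendsto_divide_0[OF tendsto_const] filterlim_at_top_imp_at_infinity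
        filterlim_compose[OF sqrt_at_top filterlim_real_of_nat_at_top[OF L]])
  then have "((\<lambda>n. (\<Sum>k\<in>{I n..<I n + Ls n}. g k) / real (Ls n) - r) \<longlongrightarrow> 0) sequentially"
  proof (rule tendsto_0_le[where K=1])
    show "eventually (\<lambda>n. norm ((\<Sum>k\<in>{I n..<I n + Ls n}. g k) / real (Ls n) - r)
            \<le> norm (K / sqrt (real (Ls n))) * 1) sequentially"
      using eventually_ge_of_filterlim[OF L, of 1]
    proof eventually_elim
      case (elim n)
      define x S where "x = real (Ls n)" and "S = (\<Sum>k\<in>{I n..<I n + Ls n}. g k)"
      have x: "x \<ge> 1" using elim by (simp add: x_def)
      have "\<bar>S / x - r\<bar> = \<bar>S - r * x\<bar> / x" using x by (simp add: field_simps)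
      also have "\<dots> \<le> K * sqrt x / x"
        using assms[of "I n" "Ls n"] x by (simp add: S_def x_def divide_right_mono)
      also have "\<dots> = K / sqrt x"
        using x by (metis real_div_sqrt less_imp_le divide_divide_eq_right times_divide_eq_right mult.commute
            real_sqrt_gt_0_iff less_irrefl zero_less_one order_less_le_trans)
      also have "\<dots> \<le> \<bar>K / sqrt x\<bar>" by (rule abs_ge_self)
      finally show ?case by (simp add: S_def x_def)
    qed
  qed
  then show "((\<lambda>n. (\<Sum>k\<in>{I n..<I n + Ls n}. g k) / real (Ls n)) \<longlongrightarrow> r) sequentially"
    by (simp add: LIM_zero_iff)
qed

lemma uniform_mean_letter_weight: "uniform_mean (\<lambda>k. q (u k)) (mean q)"
proof -
  obtain K where "\<And>i L. \<bar>window_sum q i L - mean q * real L\<bar> \<le> K * sqrt (real L)"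
    using window_sum_mean by blast
  then show ?thesis by (intro uniform_mean_of_sqrt_discrepancy[of _ "mean q" K]) (simp add: window_sum_def)
qed

lemma lam_pos: "0 < lam"
  by (simp add: lam_def add_pos_nonneg)

lemma uniform_mean_phi_len: "uniform_mean (\<lambda>j. real (phi_len (u j))) lam"
proof -
  have "mean (\<lambda>c. real (phi_len c)) = lam" by (simp add: mean_def lam_def field_simps)
  then show ?thesis using uniform_mean_letter_weight[of "\<lambda>c. real (phi_len c)"] by simp
qed

lemma next_block_window:
  fixes i L :: nat
  defines "a \<equiv> next_block i" and "M \<equiv> next_block (i + L) - next_block i"
  shows "next_block (i + L) = a + M"
    and "block_pos (a + M) - block_pos a \<le> L + 3" and "L \<le> block_pos (a + M) - block_pos a + 3"
    and "block_pos (a + M) - block_pos a \<le> 4 * M"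
proof -
  show aM: "next_block (i + L) = a + M" using next_block_mono[of i "i + L"] by (simp add: a_def M_def)
  show "block_pos (a + M) - block_pos a \<le> L + 3" "L \<le> block_pos (a + M) - block_pos a + 3"
    using next_block_bounds[of i] next_block_bounds[of "i + L"] aM unfolding a_def by simp_all
  show "block_pos (a + M) - block_pos a \<le> 4 * M"
    using block_pos_diff_bounds(2)[of a "a + M"] by simp
qed

lemma uniform_mean_desubst:
  fixes P g :: "nat \<Rightarrow> real"
  assumes B: "\<And>k. \<bar>P k\<bar> \<le> B"
    and block: "\<And>j. (\<Sum>t<phi_len (u j). P (block_pos j + t)) = g j"
    and g: "uniform_mean g r"
  shows "uniform_mean P (r / lam)"
  unfolding uniform_mean_def
proof (intro allI impI)
  fix I Ls :: "nat \<Rightarrow> nat"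
  assume L: "filterlim Ls at_top sequentially"
  define a M T S G where "a n = next_block (I n)" and "M n = next_block (I n + Ls n) - next_block (I n)"
    and "T n = block_pos (a n + M n) - block_pos (a n)" and "S n = (\<Sum>k\<in>{I n..<I n + Ls n}. P k)"
    and "G n = sum g {a n..<a n + M n}" for n
  have split: "sum h {block_pos (a n)..<block_pos (a n + M n)}
      = (\<Sum>j\<in>{a n..<a n + M n}. \<Sum>t<phi_len (u j). h (block_pos j + t))" for h :: "nat \<Rightarrow> real" and n
    by (rule sum_block_pos_split) simp
  have SG: "\<bar>S n - G n\<bar> \<le> 6 * B" for n
    using sum_window_to_blocks[where F=P and B=B and i="I n" and L="Ls n", OF B] split[of P n] next_block_window(1)[of "I n" "Ls n"]
    by (simp add: S_def G_def a_def M_def block)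
  have T: "real (T n) = (\<Sum>j\<in>{a n..<a n + M n}. real (phi_len (u j)))" for n
    using split[of "\<lambda>_. 1" n] block_pos_le_iff[of "a n" "a n + M n"] by (simp add: T_def)
  have TL: "\<bar>real (T n) - real (Ls n)\<bar> \<le> 6" and MT: "real (T n) \<le> 4 * real (M n)" for n
  proof -
    have "T n \<le> Ls n + 3" "Ls n \<le> T n + 3" "T n \<le> 4 * M n"
      using next_block_window(2-4)[where i="I n" and L="Ls n"] unfolding T_def a_def M_def by simp_all
    then show "\<bar>real (T n) - real (Ls n)\<bar> \<le> 6" "real (T n) \<le> 4 * real (M n)"
      by (simp_all add: abs_le_iff of_nat_mono[of "T n", simplified] flip: of_nat_le_iff)
  qed
  have M: "filterlim M at_top sequentially"
    unfolding filterlim_at_top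
  proof
    fix Z :: nat
    show "eventually (\<lambda>n. Z \<le> M n) sequentially"
      using eventually_ge_of_filterlim[OF L, of "4 * Z + 6"]
    proof eventually_elim
      case (elim n)
      then show ?case using TL[of n] MT[of n] by linarith
    qed
  qed
  have lim_G: "((\<lambda>n. G n / real (M n)) \<longlongrightarrow> r) sequentially"
    using g M unfolding uniform_mean_def G_def by blast
  have "((\<lambda>n. real (T n) / real (M n)) \<longlongrightarrow> lam) sequentially"
    using uniform_mean_phi_len M unfolding uniform_mean_def T by blast
  then have "((\<lambda>n. 1 / (real (T n) / real (M n))) \<longlongrightarrow> 1 / lam) sequentially"
    using lam_pos by (intro tendsto_divide tendsto_const) simp_all
  then have lim_MT: "((\<lambda>n. real (M n) / real (T n)) \<longlongrightarrow> 1 / lam) sequentially"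
    by simp
  have lim_TL: "((\<lambda>n. real (T n) / real (Ls n)) \<longlongrightarrow> 1) sequentially"
    by (rule tendsto_ratio_1_of_bounded_diff[OF TL L])
  have "((\<lambda>n. (S n - G n) / real (Ls n) + G n / real (M n) * (real (M n) / real (T n)) * (real (T n) / real (Ls n)))
      \<longlongrightarrow> 0 + r * (1 / lam) * 1) sequentially"
    by (intro tendsto_add tendsto_mult lim_G lim_MT lim_TL bounded_divide_tendsto_0[OF SG L])
  moreover have "eventually (\<lambda>n. (S n - G n) / real (Ls n) + G n / real (M n) * (real (M n) / real (T n))
      * (real (T n) / real (Ls n)) = S n / real (Ls n)) sequentially"
    using eventually_ge_of_filterlim[OF L, of 7]
  proof eventually_elim
    case (elim n)
    then have "real (T n) > 0" "real (M n) > 0" using TL[of n] MT[of n] by linarith+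
    then show ?case using elim by (simp add: field_simps)
  qed
  ultimately show "((\<lambda>n. (\<Sum>k\<in>{I n..<I n + Ls n}. P k) / real (Ls n)) \<longlongrightarrow> r / lam) sequentially"
    using tendsto_cong by (fastforce simp: S_def)
qed

definition occ_indicator :: "nat list \<Rightarrow> nat \<Rightarrow> real" where
  "occ_indicator w k = (if occurs_at w k then 1 else 0)"

lemma abs_occ_indicator_le: "\<bar>occ_indicator w k\<bar> \<le> 1"
  by (simp add: occ_indicator_def)

text \<open>Occurrences of \<open>Phi w\<close> start only at block positions, one for each occurrence of \<open>w\<close>.\<close>

lemma uniform_mean_Phi:
  assumes "w \<noteq> []" "\<forall>c\<in>set w. c \<le> 3" "uniform_mean (occ_indicator w) r"
  shows "uniform_mean (occ_indicator (Phi w)) (r / lam)"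
proof (rule uniform_mean_desubst[OF abs_occ_indicator_le _ assms(3)])
  fix j
  obtain n where n: "phi_len (u j) = Suc n" using phi_len_bounds(1)[of "u j"] by (cases "phi_len (u j)") auto
  have "occ_indicator (Phi w) (block_pos j + Suc t) = 0" if "t < n" for t
  proof -
    have "block_pos j + Suc t \<noteq> block_pos j'" for j'
      using block_pos_decomp_unique[of "Suc t" j 0 j'] that n phi_len_bounds(1)[of "u j'"] by auto
    then show ?thesis using occurs_at_Phi_iff[OF assms(1,2)] by (auto simp: occ_indicator_def)
  qed
  then have "(\<Sum>t<phi_len (u j). occ_indicator (Phi w) (block_pos j + t)) = occ_indicator (Phi w) (block_pos j)"
    unfolding n sum.lessThan_Suc_shift by simp
  also have "\<dots> = occ_indicator w j" using occurs_at_Phi_iff[OF assms(1,2)] by (simp add: occ_indicator_def)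
  finally show "(\<Sum>t<phi_len (u j). occ_indicator (Phi w) (block_pos j + t)) = occ_indicator w j" .
qed

lemma uniform_mean_letter: "uniform_mean (occ_indicator [c]) (mean (\<lambda>x. if x = c then 1 else 0))"
proof -
  have "occ_indicator [c] = (\<lambda>k. (\<lambda>x. if x = c then 1 else 0) (u k))"
    by (auto simp: occ_indicator_def)
  then show ?thesis using uniform_mean_letter_weight by simp
qed

text \<open>\<open>m c\<close> is the number of occurrences of \<open>w\<close> starting in a block \<open>\<phi>(c)\<close>; that it depends
  only on \<open>c\<close> is checked on the ten factors of length three.\<close>

lemma uniform_mean_short:
  fixes m :: "nat \<Rightarrow> real"
  assumes "length w \<le> 6"
    and m: "\<forall>(c, d, e)\<in>set adjacent_triples. (\<Sum>t<phi_len c.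
        (if take (length w) (drop t (phi c @ phi d @ phi e)) = w then 1 else 0)) = m c"
  shows "uniform_mean (occ_indicator w) (mean m / lam)"
proof (rule uniform_mean_desubst[OF abs_occ_indicator_le _ uniform_mean_letter_weight])
  fix j
  have "(\<Sum>t<phi_len (u j). occ_indicator w (block_pos j + t))
      = (\<Sum>t<phi_len (u j). (if take (length w) (drop t (three_blocks j)) = w then 1 else 0))"
    using window_three_blocks[OF _ assms(1)] by (intro sum.cong) (simp_all add: occ_indicator_def occurs_at_def)
  also have "\<dots> = m (u j)" using m u_triple_mem[of j] unfolding three_blocks_def by fastforce
  finally show "(\<Sum>t<phi_len (u j). occ_indicator w (block_pos j + t)) = m (u j)" .
qed

lemma uniform_mean_short_bispecials:
  "uniform_mean (occ_indicator [0,1]) (mean (\<lambda>c. if c = 0 then 2 else if c = 3 then 1 else 0) / lam)"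
  "uniform_mean (occ_indicator [1,0]) (mean (\<lambda>c. if c = 1 then 2 else if c = 2 then 1 else 0) / lam)"
  "uniform_mean (occ_indicator [0,1,3,0,1]) (mean (\<lambda>c. if c = 0 \<or> c = 3 then 1 else 0) / lam)"
  "uniform_mean (occ_indicator [1,0,2,1,0]) (mean (\<lambda>c. if c = 1 \<or> c = 2 then 1 else 0) / lam)"
  by (rule uniform_mean_short; simp add: adjacent_triples_def lessThan_atLeast0 upt_rec
      sum_set_upt_conv_sum_list_nat[of _ 0, simplified])+

lemma bispecial_uniform_mean:
  "factor w \<Longrightarrow> bispecial w \<Longrightarrow> w \<noteq> [] \<Longrightarrow> \<exists>r. uniform_mean (occ_indicator w) r"
proof (induction "length w" arbitrary: w rule: less_induct)
  case less
  show ?case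
  proof (cases "length w \<le> 5")
    case True
    then show ?thesis
      using short_bispecials[OF less.prems(1,2,3)] uniform_mean_letter uniform_mean_short_bispecials by auto
  next
    case False
    then obtain w' where w': "factor w'" "w' \<noteq> []" "w = Phi w'" "length w' < length w"
      using bispecial_eq_Phi[OF less.prems(1,2)] by auto
    then obtain r where "uniform_mean (occ_indicator w') r"
      using less.hyps bispecial_Phi_imp less.prems(2) by blast
    then show ?thesis using uniform_mean_Phi factor_letters w' by blast
  qed
qed

lemma occ_window_approx:
  assumes "w \<noteq> []"
  shows "\<bar>real (occ w (map u [i..<i+L])) - sum (occ_indicator w) {i..<i+L}\<bar> \<le> real (length w)"
proof -
  define A where "A = {t. t + length w \<le> L \<and> occurs_at w (i+t)}"
  define B where "B = {t. t < L \<and> occurs_at w (i+t)}"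
  have occ: "occ w (map u [i..<i+L]) = card A"
    unfolding occ_def A_def
  proof (intro arg_cong[where f=card] Collect_cong)
    fix t
    show "(t + length w \<le> length (map u [i..<i + L]) \<and> take (length w) (drop t (map u [i..<i + L])) = w) =
          (t + length w \<le> L \<and> occurs_at w (i + t))"
      by (cases "t + length w \<le> L") (simp_all add: drop_map take_map occurs_at_def add.assoc)
  qed
  have "sum (occ_indicator w) {i..<i+L} = (\<Sum>t<L. occ_indicator w (i + t))"
    by (simp add: lessThan_atLeast0 sum.shift_bounds_nat_ivl[of _ 0 i, simplified] add.commute)
  also have "\<dots> = real (card ({..<L} \<inter> {t. occurs_at w (i + t)}))"
    by (simp add: occ_indicator_def sum.If_cases)
  also have "{..<L} \<inter> {t. occurs_at w (i + t)} = B" by (auto simp: B_def)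
  finally have sum: "sum (occ_indicator w) {i..<i+L} = real (card B)" .
  have AB: "A \<subseteq> B"
  proof
    fix t assume "t \<in> A"
    then have t: "t + length w \<le> L" "occurs_at w (i + t)" by (simp_all add: A_def)
    moreover have "0 < length w" using assms by simp
    ultimately have "t < L" by linarith
    then show "t \<in> B" using t(2) unfolding B_def by simp
  qed
  have fin: "finite B" by (simp add: B_def)
  have "B - A \<subseteq> {L - length w..<L}" by (auto simp: A_def B_def)
  then have "card (B - A) \<le> card {L - length w..<L}" by (intro card_mono) simp_all
  then have "card (B - A) \<le> length w" by simp
  moreover have "card (B - A) = card B - card A" "card A \<le> card B"
    using card_Diff_subset[OF finite_subset[OF AB fin] AB] card_mono[OF fin AB] by simp_all
  ultimately show ?thesis using occ sum by simp
qed

lemma has_freq_if_uniform_mean: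
  assumes "w \<noteq> []" "uniform_mean (occ_indicator w) r"
  shows "has_freq w r"
proof (rule ccontr)
  assume "\<not> has_freq w r"
  then obtain e where e: "e > 0" and bad: "\<forall>N. \<exists>v. factor v \<and> length v \<ge> N \<and>
      \<not> \<bar>real (occ w v) / real (length v) - r\<bar> < e"
    unfolding has_freq_def by blast
  obtain vs where vs: "\<forall>N. factor (vs N) \<and> length (vs N) \<ge> N \<and>
      \<not> \<bar>real (occ w (vs N)) / real (length (vs N)) - r\<bar> < e"
    using choice[OF bad] by blast
  define Ls where "Ls N = length (vs N)" for N
  have "\<forall>N. \<exists>i. vs N = map u [i..<i + Ls N]"
  proof
    fix N
    have "factor (vs N)" using vs by blast
    then show "\<exists>i. vs N = map u [i..<i + Ls N]" unfolding factor_def Ls_def .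
  qed
  then obtain I where I: "\<And>N. vs N = map u [I N..<I N + Ls N]" using choice by metis
  have L: "filterlim Ls at_top sequentially"
    unfolding filterlim_at_top eventually_sequentially using vs le_trans by (metis Ls_def)
  have "((\<lambda>n. sum (occ_indicator w) {I n..<I n + Ls n} / real (Ls n)) \<longlongrightarrow> r) sequentially"
    using assms(2) L unfolding uniform_mean_def by blast
  moreover have "((\<lambda>n. (real (occ w (vs n)) - sum (occ_indicator w) {I n..<I n + Ls n}) / real (Ls n))
      \<longlongrightarrow> 0) sequentially"
    by (rule bounded_divide_tendsto_0[OF _ L]) (use occ_window_approx[OF assms(1)] I in simp)
  ultimately have "((\<lambda>n. (real (occ w (vs n)) - sum (occ_indicator w) {I n..<I n + Ls n}) / real (Ls n)
      + sum (occ_indicator w) {I n..<I n + Ls n} / real (Ls n)) \<longlongrightarrow> 0 + r) sequentially"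
    by (intro tendsto_add)
  then have "((\<lambda>n. real (occ w (vs n)) / real (length (vs n))) \<longlongrightarrow> r) sequentially"
    by (simp add: Ls_def add_divide_distrib[symmetric])
  then have "eventually (\<lambda>n. dist (real (occ w (vs n)) / real (length (vs n))) r < e) sequentially"
    using e by (rule tendstoD)
  then obtain n where "dist (real (occ w (vs n)) / real (length (vs n))) r < e"
    by (auto simp: eventually_sequentially)
  then show False using vs by (simp add: dist_real_def)
qed

lemma has_freq_unique:
  assumes "has_freq w r" "has_freq w s"
  shows "r = s"
proof (rule ccontr)
  assume "r \<noteq> s"
  define e where "e = \<bar>r - s\<bar> / 2"
  have "e > 0" using \<open>r \<noteq> s\<close> by (simp add: e_def)
  then obtain N1 N2 where
    N1: "\<And>v. factor v \<and> length v \<ge> N1 \<Longrightarrow> \<bar>real (occ w v) / real (length v) - r\<bar> < e" and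
    N2: "\<And>v. factor v \<and> length v \<ge> N2 \<Longrightarrow> \<bar>real (occ w v) / real (length v) - s\<bar> < e"
    using assms unfolding has_freq_def by meson
  define v where "v = map u [0..<max N1 N2]"
  define x where "x = real (occ w v) / real (length v)"
  have "factor v" unfolding factor_def v_def by (rule exI[of _ 0]) simp
  then have "\<bar>x - s\<bar> < e" "\<bar>x - r\<bar> < e" using N1[of v] N2[of v] by (auto simp: v_def x_def)
  then have "\<bar>x - s\<bar> + \<bar>x - r\<bar> < \<bar>r - s\<bar>" using add_strict_mono by (fastforce simp: e_def)
  moreover have "r - s = (x - s) - (x - r)" by simp
  then have "\<bar>r - s\<bar> \<le> \<bar>x - s\<bar> + \<bar>x - r\<bar>" using abs_triangle_ineq4 by metis
  ultimately show False by simp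
qed

lemma rho_eqI: "has_freq w r \<Longrightarrow> rho w = r"
  unfolding rho_def using has_freq_unique by blast

theorem proposition23:
  fixes v :: "nat list"
  assumes "factor v" and "bispecial v" and "length v > 5"
  shows "\<exists>w. factor w \<and> w \<noteq> [] \<and> v = phiw w @ p (last w) \<and> rho v = rho w / lam"
proof -
  obtain w where w: "factor w" "w \<noteq> []" "v = Phi w"
    using bispecial_eq_Phi[OF assms] by blast
  have "bispecial w" using bispecial_Phi_imp w assms(2) by blast
  then obtain r where r: "uniform_mean (occ_indicator w) r"
    using bispecial_uniform_mean w by blast
  have "uniform_mean (occ_indicator v) (r / lam)" using uniform_mean_Phi factor_letters w r by blast
  moreover have "v \<noteq> []" using assms(3) by auto
  ultimately have "rho v = r / lam" by (intro rho_eqI has_freq_if_uniform_mean)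
  moreover have "rho w = r" using rho_eqI has_freq_if_uniform_mean w(2) r by blast
  ultimately show ?thesis using w by (auto simp: Phi_def)
qed

end
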